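(* Let $k\ge1$ be an integer, $G$ a graph and $A,B\subseteq V(G)$ with $\mathrm{dist}(A,B)>2^k$ and \[\mathrm{tp}_k\big(G\langle X\mapsto A\rangle[N_{2^{k-1}-1}[A]]\big)=\mathrm{tp}_k\big(G\langle X\mapsto B\rangle[N_{2^{k-1}-1}[B]]\big).\] Then for every first-order formula $\varphi(x)$ of quantifier rank at most $k-1$ in the signature of $G$, \[G\langle A\rangle\models\exists x\in A\ \varphi(x)\iff G\langle B\rangle\models\exists x\in B\ \varphi(x).\]
   Context: Graphs are finite, loopless, undirected, with finitely many unary color predicates. $\mathrm{dist}(A,B)$ is the minimum distance between a vertex of $A$ and a vertex of $B$; $N_r[S]$ is the set of vertices at distance at most $r$ from $S$. $G\langle X\mapsto W\rangle$ is $G$ expanded by a new unary predicate $X$ interpreted as $W$; $G\langle W\rangle$ is the expansion by a new unary predicate named $W$ interpreted as $W$; $\exists x\in W\,\psi$ abbreviates $\exists x\,(W(x)\wedge\psi)$. $H[S]$ denotes the induced substructure. $\mathrm{tp}_k(H)$ is the set of first-order sentences of quantifier rank at most $k$ true in $H$. *)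

theory Defs
  imports Main
begin

record ('v, 'c) cgraph =
  verts :: "'v set"
  adj   :: "'v \<Rightarrow> 'v \<Rightarrow> bool"
  col   :: "'c \<Rightarrow> 'v set"

definition wf_cgraph :: "('v, 'c) cgraph \<Rightarrow> bool" where
  "wf_cgraph G \<longleftrightarrow> finite (verts G)
     \<and> (\<forall>u v. adj G u v \<longrightarrow> u \<in> verts G \<and> v \<in> verts G)
     \<and> (\<forall>u v. adj G u v \<longrightarrow> adj G v u)
     \<and> (\<forall>u. \<not> adj G u u)
     \<and> (\<forall>c. col G c \<subseteq> verts G)"

fun reach :: "('v, 'c) cgraph \<Rightarrow> nat \<Rightarrow> 'v \<Rightarrow> 'v \<Rightarrow> bool" where
  "reach G 0 u v \<longleftrightarrow> u = v \<and> u \<in> verts G"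
| "reach G (Suc n) u v \<longleftrightarrow> reach G n u v \<or> (\<exists>w. reach G n u w \<and> adj G w v)"

definition dist_gt :: "('v, 'c) cgraph \<Rightarrow> 'v set \<Rightarrow> 'v set \<Rightarrow> nat \<Rightarrow> bool" where
  "dist_gt G A B d \<longleftrightarrow> \<not> (\<exists>a\<in>A. \<exists>b\<in>B. reach G d a b)"

definition nbhd :: "('v, 'c) cgraph \<Rightarrow> nat \<Rightarrow> 'v set \<Rightarrow> 'v set" where
  "nbhd G r S = {v \<in> verts G. \<exists>u\<in>S. reach G r u v}"

definition induced :: "('v, 'c) cgraph \<Rightarrow> 'v set \<Rightarrow> ('v, 'c) cgraph" where
  "induced G S = \<lparr> verts = verts G \<inter> S,
                   adj = (\<lambda>u v. adj G u v \<and> u \<in> S \<and> v \<in> S),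
                   col = (\<lambda>c. col G c \<inter> S) \<rparr>"

text \<open>Expansion G<X |-> W> by a new unary predicate X, represented by the colour name None;
  old colour c is renamed Some c.\<close>
definition expand :: "('v, 'c) cgraph \<Rightarrow> 'v set \<Rightarrow> ('v, 'c option) cgraph" where
  "expand G W = \<lparr> verts = verts G, adj = adj G,
                  col = (\<lambda>c. case c of None \<Rightarrow> W | Some d \<Rightarrow> col G d) \<rparr>"

datatype 'c fm =
    FEq nat nat
  | FAdj nat nat
  | FCol 'c nat
  | FNot "'c fm"
  | FAnd "'c fm" "'c fm"
  | FEx nat "'c fm"

fun fv :: "'c fm \<Rightarrow> nat set" where
  "fv (FEq x y) = {x, y}"
| "fv (FAdj x y) = {x, y}"
| "fv (FCol c x) = {x}"
| "fv (FNot \<phi>) = fv \<phi>"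
| "fv (FAnd \<phi> \<psi>) = fv \<phi> \<union> fv \<psi>"
| "fv (FEx x \<phi>) = fv \<phi> - {x}"

fun qr :: "'c fm \<Rightarrow> nat" where
  "qr (FEq x y) = 0"
| "qr (FAdj x y) = 0"
| "qr (FCol c x) = 0"
| "qr (FNot \<phi>) = qr \<phi>"
| "qr (FAnd \<phi> \<psi>) = max (qr \<phi>) (qr \<psi>)"
| "qr (FEx x \<phi>) = Suc (qr \<phi>)"

fun sat :: "('v, 'c) cgraph \<Rightarrow> (nat \<Rightarrow> 'v) \<Rightarrow> 'c fm \<Rightarrow> bool" where
  "sat G e (FEq x y) \<longleftrightarrow> e x = e y"
| "sat G e (FAdj x y) \<longleftrightarrow> adj G (e x) (e y)"
| "sat G e (FCol c x) \<longleftrightarrow> e x \<in> col G c"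
| "sat G e (FNot \<phi>) \<longleftrightarrow> \<not> sat G e \<phi>"
| "sat G e (FAnd \<phi> \<psi>) \<longleftrightarrow> sat G e \<phi> \<and> sat G e \<psi>"
| "sat G e (FEx x \<phi>) \<longleftrightarrow> (\<exists>v\<in>verts G. sat G (e(x := v)) \<phi>)"

definition tp :: "nat \<Rightarrow> ('v, 'c) cgraph \<Rightarrow> 'c fm set" where
  "tp k H = {\<phi>. fv \<phi> = {} \<and> qr \<phi> \<le> k \<and> sat H (\<lambda>_. undefined) \<phi>}"

end

theory Submission
  imports Defs
begin

(* By the Ehrenfeucht-Fraisse theorem for the finite local structures, equal rank-k types give
   Duplicator a winning strategy in the k-round game between the (2^(k-1) - 1)-neighbourhoods
   of A and B, and her answer b to a pebble a in A lies in B.  It remains to play the (k-1)-round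
   game on G against itself from (a, b): pebbles near A are answered by the local strategy,
   pebbles near B by its inverse, and all other vertices by themselves.  With j rounds left the
   local pebbles stay within 2^(k-1) - 2^j of A resp. B, so everything within 2^j of them still
   lies in the local structures, and the copied vertices stay more than 2^j away from them.
   Since dist(A, B) > 2^k the three kinds of pairs never interact, and since distance at most
   2^j is expressible with j quantifiers, the local strategy preserves it. *)

section \<open>Walks and neighbourhoods\<close>

lemma wf_cgraph_adjD:
  assumes "wf_cgraph H" "adj H u v"
  shows "u \<in> verts H" "v \<in> verts H" "adj H v u"
  using assms unfolding wf_cgraph_def by blast+

lemma reach_source_verts: "reach H n u v \<Longrightarrow> u \<in> verts H"
  by (induction n arbitrary: v) auto

lemma reach_target_verts: "wf_cgraph H \<Longrightarrow> reach H n u v \<Longrightarrow> v \<in> verts H"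
  by (induction n arbitrary: v) (auto dest: wf_cgraph_adjD)

lemma reach_refl: "u \<in> verts H \<Longrightarrow> reach H n u u"
  by (induction n) auto

lemma reach_mono: "reach H n u v \<Longrightarrow> n \<le> n' \<Longrightarrow> reach H n' u v"
  by (induction n') (auto simp: le_Suc_eq)

lemma reach_trans: "reach H n u v \<Longrightarrow> reach H n' v w \<Longrightarrow> reach H (n + n') u w"
  by (induction n' arbitrary: w) auto

lemma reach_adj: "u \<in> verts H \<Longrightarrow> adj H u v \<Longrightarrow> reach H (Suc n) u v"
  using reach_refl by (metis reach.simps(2))

lemma reach_sym:
  assumes "wf_cgraph H"
  shows "reach H n u v \<Longrightarrow> reach H n v u"
proof (induction n arbitrary: v)
  case (Suc n)
  show ?case
  proof (cases "reach H n u v")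
    case False
    then obtain w where w: "reach H n u w" "adj H w v" using Suc.prems by auto
    have "reach H (Suc 0) v w" by (rule reach_adj) (use wf_cgraph_adjD[OF assms w(2)] in auto)
    then show ?thesis using reach_trans Suc.IH[OF w(1)] by fastforce
  qed (use Suc.IH in simp)
qed simp

lemma reach_add_split:
  assumes "wf_cgraph H"
  shows "reach H (n + n') u w \<Longrightarrow> \<exists>v. reach H n u v \<and> reach H n' v w"
proof (induction n' arbitrary: w)
  case 0
  then show ?case using reach_refl reach_target_verts[OF assms] by fastforce
next
  case (Suc n')
  then show ?case by (metis add_Suc_right reach.simps(2))
qed

lemma nbhd_subset_verts: "nbhd G r S \<subseteq> verts G"
  by (auto simp: nbhd_def)

lemma subset_nbhd: "S \<subseteq> verts G \<Longrightarrow> S \<subseteq> nbhd G r S"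
  using reach_refl[of _ G r] by (auto simp: nbhd_def)

lemma nbhd_mono:
  assumes "r \<le> s" "S \<subseteq> T"
  shows "nbhd G r S \<subseteq> nbhd G s T"
  using assms reach_mono[of G r _ _ s] by (auto simp: nbhd_def)

lemma nbhd_nbhd: "nbhd G r (nbhd G s S) \<subseteq> nbhd G (s + r) S"
  using reach_trans[of G s _ _ r] by (auto simp: nbhd_def)

lemma nbhd_singleton_subset: "x \<in> nbhd G s S \<Longrightarrow> nbhd G r {x} \<subseteq> nbhd G (s + r) S"
  using nbhd_mono[of r r "{x}" "nbhd G s S" G] nbhd_nbhd[of G r s S] by blast

lemma nbhd_Un: "nbhd G r (S \<union> T) = nbhd G r S \<union> nbhd G r T"
  unfolding nbhd_def by blast

lemma dist_gt_sym: "wf_cgraph G \<Longrightarrow> dist_gt G A B d \<Longrightarrow> dist_gt G B A d"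
  unfolding dist_gt_def using reach_sym[of G d] by blast

definition separated :: "('v, 'c) cgraph \<Rightarrow> 'v set \<Rightarrow> 'v set \<Rightarrow> bool" where
  "separated H S T \<longleftrightarrow> (\<forall>s\<in>S. \<forall>t\<in>T. s \<noteq> t \<and> \<not> adj H s t \<and> \<not> adj H t s)"

lemma separated_nbhds:
  assumes wf: "wf_cgraph G" and dist: "dist_gt G A B d" and d: "r + s < d"
  shows "separated G (nbhd G r A) (nbhd G s B)"
  unfolding separated_def
proof (intro ballI)
  fix x y assume "x \<in> nbhd G r A" "y \<in> nbhd G s B"
  then obtain a b where a: "a \<in> A" "reach G r a x" and b: "b \<in> B" "reach G s y b"
    unfolding nbhd_def using reach_sym[OF wf, of s] by blast
  have x: "x \<in> verts G" using reach_target_verts[OF wf a(2)] .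
  have "\<not> reach G (Suc 0) x y"
  proof
    assume "reach G (Suc 0) x y"
    then have "reach G (r + Suc 0 + s) a b" by (rule reach_trans[OF reach_trans[OF a(2)] b(2)])
    then have "reach G d a b" by (rule reach_mono) (use d in simp)
    then show False using dist a(1) b(1) unfolding dist_gt_def by blast
  qed
  moreover have "reach G (Suc 0) x y" if "x = y \<or> adj G x y"
    using that reach_refl[OF x, of "Suc 0"] reach_adj[OF x, of y 0] by blast
  ultimately show "x \<noteq> y \<and> \<not> adj G x y \<and> \<not> adj G y x"
    using wf_cgraph_adjD(3)[OF wf, of y x] by blast
qed

lemma separated_compl_nbhd:
  assumes wf: "wf_cgraph G" and r: "0 < r"
  shows "separated G S (verts G - nbhd G r S)"
  unfolding separated_def
proof (intro ballI)
  fix s t assume s: "s \<in> S" and t: "t \<in> verts G - nbhd G r S"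
  have far: "\<not> reach G r s t" using s t unfolding nbhd_def by blast
  have "s \<noteq> t"
  proof
    assume "s = t"
    then show False using far reach_refl[of t G r] t by blast
  qed
  moreover have "\<not> adj G s t"
  proof
    assume st: "adj G s t"
    have "reach G (Suc (r - 1)) s t" by (rule reach_adj[OF wf_cgraph_adjD(1)[OF wf st] st])
    then show False using far r by simp
  qed
  ultimately show "s \<noteq> t \<and> \<not> adj G s t \<and> \<not> adj G t s"
    using wf_cgraph_adjD(3)[OF wf] by blast
qed

lemma separated_mono: "separated H S T \<Longrightarrow> S' \<subseteq> S \<Longrightarrow> T' \<subseteq> T \<Longrightarrow> separated H S' T'"
  unfolding separated_def by blast

lemma separated_sym: "separated H S T \<Longrightarrow> separated H T S"
  unfolding separated_def by blast

section \<open>Ehrenfeucht-Fraisse games\<close>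

fun reach_fm :: "nat \<Rightarrow> nat \<Rightarrow> nat \<Rightarrow> 'c fm" where
  "reach_fm 0 x y = FNot (FAnd (FNot (FEq x y)) (FNot (FAdj x y)))"
| "reach_fm (Suc i) x y =
     FEx (Suc (max x y)) (FAnd (reach_fm i x (Suc (max x y))) (reach_fm i (Suc (max x y)) y))"

lemma qr_reach_fm: "qr (reach_fm i x y) = i"
  by (induction i arbitrary: x y) auto

lemma fv_reach_fm: "fv (reach_fm i x y) \<subseteq> {x, y}"
  by (induction i arbitrary: x y) auto

lemma sat_reach_fm:
  assumes wf: "wf_cgraph H"
  shows "e x \<in> verts H \<Longrightarrow> sat H e (reach_fm i x y) \<longleftrightarrow> reach H (2 ^ i) (e x) (e y)"
proof (induction i arbitrary: x y e)
  case 0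
  then show ?case using reach_refl[of "e x" H 0] by auto
next
  case (Suc i)
  let ?z = "Suc (max x y)"
  have fresh: "x \<noteq> ?z" "y \<noteq> ?z" by auto
  have "sat H e (reach_fm (Suc i) x y) \<longleftrightarrow>
      (\<exists>v\<in>verts H. sat H (e(?z := v)) (reach_fm i x ?z) \<and> sat H (e(?z := v)) (reach_fm i ?z y))"
    by simp
  also have "\<dots> \<longleftrightarrow> (\<exists>v\<in>verts H. reach H (2 ^ i) (e x) v \<and> reach H (2 ^ i) v (e y))"
  proof (intro bex_cong refl)
    fix v assume v: "v \<in> verts H"
    have upd: "(e(?z := v)) x = e x" "(e(?z := v)) ?z = v" "(e(?z := v)) y = e y"
      using fresh by simp_all
    show "sat H (e(?z := v)) (reach_fm i x ?z) \<and> sat H (e(?z := v)) (reach_fm i ?z y)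
        \<longleftrightarrow> reach H (2 ^ i) (e x) v \<and> reach H (2 ^ i) v (e y)"
      using Suc.IH[of "e(?z := v)" x ?z] Suc.IH[of "e(?z := v)" ?z y] Suc.prems v
      unfolding upd by blast
  qed
  also have "\<dots> \<longleftrightarrow> reach H (2 ^ i + 2 ^ i) (e x) (e y)"
    using reach_trans[of H "2 ^ i" "e x" _ "2 ^ i" "e y"] reach_add_split[OF wf, of "2 ^ i" "2 ^ i"]
      reach_source_verts[of H "2 ^ i" _ "e y"] by blast
  finally show ?case by (simp only: power_Suc mult_2)
qed

definition partial_iso :: "('v, 'c) cgraph \<Rightarrow> ('w, 'c) cgraph \<Rightarrow> ('v \<times> 'w) set \<Rightarrow> bool" where
  "partial_iso H H' P \<longleftrightarrow> P \<subseteq> verts H \<times> verts H'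
     \<and> (\<forall>x x' y y'. (x, x') \<in> P \<longrightarrow> (y, y') \<in> P \<longrightarrow>
          (x = y \<longleftrightarrow> x' = y') \<and> (adj H x y \<longleftrightarrow> adj H' x' y'))
     \<and> (\<forall>x x' c. (x, x') \<in> P \<longrightarrow> (x \<in> col H c \<longleftrightarrow> x' \<in> col H' c))"

lemma partial_isoI:
  assumes "P \<subseteq> verts H \<times> verts H'"
    and "\<And>x x' y y'. (x, x') \<in> P \<Longrightarrow> (y, y') \<in> P \<Longrightarrow>
      (x = y \<longleftrightarrow> x' = y') \<and> (adj H x y \<longleftrightarrow> adj H' x' y')"
    and "\<And>x x' c. (x, x') \<in> P \<Longrightarrow> x \<in> col H c \<longleftrightarrow> x' \<in> col H' c"
  shows "partial_iso H H' P"
  using assms unfolding partial_iso_def by blast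

lemma partial_isoD:
  assumes "partial_iso H H' P" "(x, x') \<in> P" "(y, y') \<in> P"
  shows "x = y \<longleftrightarrow> x' = y'" "adj H x y \<longleftrightarrow> adj H' x' y'" "x \<in> col H c \<longleftrightarrow> x' \<in> col H' c"
  using assms unfolding partial_iso_def by blast+

lemma partial_iso_subset: "partial_iso H H' P \<Longrightarrow> P' \<subseteq> P \<Longrightarrow> partial_iso H H' P'"
  unfolding partial_iso_def by blast

lemma partial_iso_converse: "partial_iso H H' P \<Longrightarrow> partial_iso H' H (P\<inverse>)"
  unfolding partial_iso_def by blast

lemma partial_iso_Un:
  assumes P: "partial_iso H H' P" and R: "partial_iso H H' R"
    and dom: "separated H (Domain P) (Domain R)" and ran: "separated H' (Range P) (Range R)"
  shows "partial_iso H H' (P \<union> R)"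
proof (rule partial_isoI)
  show "P \<union> R \<subseteq> verts H \<times> verts H'" using P R unfolding partial_iso_def by simp
  have cross: "x \<noteq> y \<and> x' \<noteq> y' \<and> \<not> adj H x y \<and> \<not> adj H y x \<and> \<not> adj H' x' y' \<and> \<not> adj H' y' x'"
    if "(x, x') \<in> P" "(y, y') \<in> R" for x x' y y'
  proof -
    have "x \<in> Domain P" "y \<in> Domain R" "x' \<in> Range P" "y' \<in> Range R" using that by blast+
    then show ?thesis using dom ran unfolding separated_def by blast
  qed
  show "(x = y \<longleftrightarrow> x' = y') \<and> (adj H x y \<longleftrightarrow> adj H' x' y')"
    if "(x, x') \<in> P \<union> R" "(y, y') \<in> P \<union> R" for x x' y y'
    using that partial_isoD(1,2)[OF P, of x x' y y'] partial_isoD(1,2)[OF R, of x x' y y']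
      cross[of x x' y y'] cross[of y y' x x'] by blast
  show "x \<in> col H c \<longleftrightarrow> x' \<in> col H' c" if "(x, x') \<in> P \<union> R" for x x' c
    using that partial_isoD(3)[OF P, of x x' x x'] partial_isoD(3)[OF R, of x x' x x'] by blast
qed

lemma partial_iso_Id_on: "F \<subseteq> verts H \<Longrightarrow> partial_iso H H (Id_on F)"
  unfolding partial_iso_def by auto

fun dup_wins :: "('v, 'c) cgraph \<Rightarrow> ('w, 'c) cgraph \<Rightarrow> nat \<Rightarrow> ('v \<times> 'w) set \<Rightarrow> bool" where
  "dup_wins H H' 0 P \<longleftrightarrow> partial_iso H H' P"
| "dup_wins H H' (Suc j) P \<longleftrightarrow> partial_iso H H' P
     \<and> (\<forall>u\<in>verts H. \<exists>u'\<in>verts H'. dup_wins H H' j (insert (u, u') P))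
     \<and> (\<forall>u'\<in>verts H'. \<exists>u\<in>verts H. dup_wins H H' j (insert (u, u') P))"

lemma dup_wins_partial_iso: "dup_wins H H' j P \<Longrightarrow> partial_iso H H' P"
  by (cases j) auto

lemma dup_wins_subset: "dup_wins H H' j P \<Longrightarrow> P' \<subseteq> P \<Longrightarrow> dup_wins H H' j P'"
proof (induction j arbitrary: P P')
  case 0
  then show ?case using partial_iso_subset by simp
next
  case (Suc j)
  have "dup_wins H H' j (insert p P) \<Longrightarrow> dup_wins H H' j (insert p P')" for p
    using Suc.IH[of "insert p P" "insert p P'"] Suc.prems(2) by blast
  moreover have "partial_iso H H' P'"
    using Suc.prems partial_iso_subset[of H H' P P'] by simp
  ultimately show ?case
    using Suc.prems(1) unfolding dup_wins.simps(2) by blast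
qed

lemma dup_wins_SucD: "dup_wins H H' (Suc j) P \<Longrightarrow> dup_wins H H' j P"
proof (induction j arbitrary: P)
  case (Suc j)
  have "dup_wins H H' (Suc j) p \<Longrightarrow> dup_wins H H' j p" for p by (rule Suc.IH)
  then show ?case
    using Suc.prems unfolding dup_wins.simps(2)[of H H' "Suc j"] dup_wins.simps(2)[of H H' j] by blast
qed simp

lemma dup_wins_converse: "dup_wins H H' j P \<Longrightarrow> dup_wins H' H j (P\<inverse>)"
proof (induction j arbitrary: P)
  case (Suc j)
  have "(insert (u, u') P)\<inverse> = insert (u', u) (P\<inverse>)" for u u' by auto
  then have "dup_wins H H' j (insert (u, u') P) \<Longrightarrow> dup_wins H' H j (insert (u', u) (P\<inverse>))"
    for u u' using Suc.IH[of "insert (u, u') P"] by simp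
  moreover have "partial_iso H' H (P\<inverse>)"
    using Suc.prems partial_iso_converse[of H H' P] by simp
  ultimately show ?case
    using Suc.prems unfolding dup_wins.simps(2) by blast
qed (simp add: partial_iso_converse)

lemma dup_wins_sat:
  "dup_wins H H' j P \<Longrightarrow> qr \<phi> \<le> j \<Longrightarrow> (\<forall>y\<in>fv \<phi>. (e y, e' y) \<in> P)
    \<Longrightarrow> sat H e \<phi> \<longleftrightarrow> sat H' e' \<phi>"
proof (induction \<phi> arbitrary: j P e e')
  case (FEq x y)
  then show ?case using partial_isoD(1)[OF dup_wins_partial_iso, of H H' j P "e x" "e' x" "e y" "e' y"]
    by simp
next
  case (FAdj x y)
  then show ?case using partial_isoD(2)[OF dup_wins_partial_iso, of H H' j P "e x" "e' x" "e y" "e' y"]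
    by simp
next
  case (FCol c x)
  then show ?case using partial_isoD(3)[OF dup_wins_partial_iso, of H H' j P "e x" "e' x" "e x" "e' x"]
    by simp
next
  case (FNot \<phi>)
  then show ?case by simp
next
  case (FAnd \<phi> \<psi>)
  have "sat H e \<phi> \<longleftrightarrow> sat H' e' \<phi>" "sat H e \<psi> \<longleftrightarrow> sat H' e' \<psi>"
    using FAnd.IH(1)[OF FAnd.prems(1)] FAnd.IH(2)[OF FAnd.prems(1)] FAnd.prems(2,3) by simp_all
  then show ?case by simp
next
  case (FEx x \<phi>)
  then obtain i where j: "j = Suc i" and i: "qr \<phi> \<le> i" by (cases j) auto
  have game: "dup_wins H H' (Suc i) P" using FEx.prems(1) j by simp
  have env: "\<forall>y\<in>fv \<phi>. ((e(x := v)) y, (e'(x := v')) y) \<in> insert (v, v') P" for v v'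
    using FEx.prems(3) by auto
  have IH: "sat H (e(x := v)) \<phi> \<longleftrightarrow> sat H' (e'(x := v')) \<phi>"
    if "dup_wins H H' i (insert (v, v') P)" for v v'
    by (rule FEx.IH[OF that i env])
  show ?case
    unfolding sat.simps(6) using game IH unfolding dup_wins.simps(2) by blast
qed

lemma dup_wins_reach_iff:
  assumes game: "dup_wins H H' j P" and wf: "wf_cgraph H" "wf_cgraph H'"
    and "(p, p') \<in> P" "(c, c') \<in> P"
  shows "reach H (2 ^ j) p c \<longleftrightarrow> reach H' (2 ^ j) p' c'"
proof -
  let ?e = "(\<lambda>_. p)(1 := c)" and ?e' = "(\<lambda>_. p')(1 := c')"
  have "sat H ?e (reach_fm j 0 1) \<longleftrightarrow> sat H' ?e' (reach_fm j 0 1)"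
  proof (rule dup_wins_sat[OF game])
    show "\<forall>y\<in>fv (reach_fm j 0 1). (?e y, ?e' y) \<in> P"
      using fv_reach_fm[of j 0 1] assms(4,5) by auto
  qed (simp add: qr_reach_fm)
  moreover have "p \<in> verts H" "p' \<in> verts H'"
    using dup_wins_partial_iso[OF game] assms(4) unfolding partial_iso_def by blast+
  ultimately show ?thesis using sat_reach_fm[OF wf(1), of ?e 0] sat_reach_fm[OF wf(2), of ?e' 0] by simp
qed

section \<open>Hintikka formulas\<close>

definition list_of_set :: "'a set \<Rightarrow> 'a list" where
  "list_of_set S = (SOME xs. set xs = S)"

lemma set_list_of_set: "finite S \<Longrightarrow> set (list_of_set S) = S"
  unfolding list_of_set_def by (rule someI_ex) (rule finite_list)

fun fm_conj :: "'c fm list \<Rightarrow> 'c fm" where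
  "fm_conj [] = FNot (FEx 0 (FNot (FEq 0 0)))"
| "fm_conj [\<phi>] = \<phi>"
| "fm_conj (\<phi> # \<psi> # \<phi>s) = FAnd \<phi> (fm_conj (\<psi> # \<phi>s))"

lemma sat_fm_conj: "sat H e (fm_conj \<phi>s) \<longleftrightarrow> (\<forall>\<phi>\<in>set \<phi>s. sat H e \<phi>)"
  by (induction \<phi>s rule: fm_conj.induct) auto

lemma fv_fm_conj: "\<forall>\<phi>\<in>set \<phi>s. fv \<phi> \<subseteq> S \<Longrightarrow> fv (fm_conj \<phi>s) \<subseteq> S"
  by (induction \<phi>s rule: fm_conj.induct) auto

lemma qr_fm_conj: "\<phi>s \<noteq> [] \<Longrightarrow> \<forall>\<phi>\<in>set \<phi>s. qr \<phi> \<le> r \<Longrightarrow> qr (fm_conj \<phi>s) \<le> r"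
  by (induction \<phi>s rule: fm_conj.induct) auto

definition fm_lit :: "bool \<Rightarrow> 'c fm \<Rightarrow> 'c fm" where
  "fm_lit b \<phi> = (if b then \<phi> else FNot \<phi>)"

lemma sat_fm_lit [simp]: "sat H e (fm_lit b \<phi>) \<longleftrightarrow> (sat H e \<phi> \<longleftrightarrow> b)"
  by (simp add: fm_lit_def)

lemma fv_fm_lit [simp]: "fv (fm_lit b \<phi>) = fv \<phi>"
  by (simp add: fm_lit_def)

lemma qr_fm_lit [simp]: "qr (fm_lit b \<phi>) = qr \<phi>"
  by (simp add: fm_lit_def)

definition env :: "'v list \<Rightarrow> nat \<Rightarrow> 'v" where
  "env us i = (if i < length us then us ! i else undefined)"

lemma env_Nil: "env [] = (\<lambda>_. undefined)"
  by (rule ext) (simp add: env_def)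

lemma env_snoc: "env (us @ [u]) = (env us)(length us := u)"
  by (auto simp: env_def nth_append)

definition atoms :: "nat \<Rightarrow> 'c::finite fm list" where
  "atoms n = [FEq i j. i \<leftarrow> [0..<n], j \<leftarrow> [0..<n]] @ [FAdj i j. i \<leftarrow> [0..<n], j \<leftarrow> [0..<n]]
     @ [FCol c i. i \<leftarrow> [0..<n], c \<leftarrow> list_of_set UNIV]"

lemma mem_atoms:
  "\<phi> \<in> set (atoms n) \<longleftrightarrow> (\<exists>i<n. \<exists>j<n. \<phi> = FEq i j \<or> \<phi> = FAdj i j) \<or> (\<exists>c. \<exists>i<n. \<phi> = FCol c i)"
  unfolding atoms_def by (simp add: set_list_of_set image_iff atLeast0LessThan; blast)

definition atomic_diagram :: "('v, 'c::finite) cgraph \<Rightarrow> 'v list \<Rightarrow> 'c fm list" where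
  "atomic_diagram H us = [fm_lit (sat H (env us) \<phi>) \<phi>. \<phi> \<leftarrow> atoms (length us)]"

lemma fv_atomic_diagram: "\<phi> \<in> set (atomic_diagram H us) \<Longrightarrow> fv \<phi> \<subseteq> {..<length us}"
  by (auto simp: atomic_diagram_def mem_atoms)

lemma qr_atomic_diagram: "\<phi> \<in> set (atomic_diagram H us) \<Longrightarrow> qr \<phi> = 0"
  by (auto simp: atomic_diagram_def mem_atoms)

lemma atomic_diagram_eq_Nil_iff: "atomic_diagram H us = [] \<longleftrightarrow> us = []"
  by (auto simp: atomic_diagram_def atoms_def)

lemma sat_atomic_diagram_iff:
  "(\<forall>\<phi>\<in>set (atomic_diagram H us). sat H' e \<phi>)
     \<longleftrightarrow> (\<forall>\<phi>\<in>set (atoms (length us)). sat H' e \<phi> \<longleftrightarrow> sat H (env us) \<phi>)"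
  by (auto simp: atomic_diagram_def)

lemma partial_iso_if_same_atoms:
  assumes "length us' = length us" "set us \<subseteq> verts H" "set us' \<subseteq> verts H'"
    and same: "\<forall>\<phi>\<in>set (atoms (length us)). sat H' (env us') \<phi> \<longleftrightarrow> sat H (env us) \<phi>"
  shows "partial_iso H H' (set (zip us us'))"
proof -
  have "(us ! i = us ! j \<longleftrightarrow> us' ! i = us' ! j) \<and> (adj H (us ! i) (us ! j) \<longleftrightarrow> adj H' (us' ! i) (us' ! j))
      \<and> (us ! i \<in> col H c \<longleftrightarrow> us' ! i \<in> col H' c)"
    if "i < length us" "j < length us" for i j c
  proof -
    have "FEq i j \<in> set (atoms (length us))" "FAdj i j \<in> set (atoms (length us))"
      "FCol c i \<in> set (atoms (length us))"
      unfolding mem_atoms using that by blast+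
    with same have "sat H' (env us') (FEq i j) \<longleftrightarrow> sat H (env us) (FEq i j)"
      "sat H' (env us') (FAdj i j) \<longleftrightarrow> sat H (env us) (FAdj i j)"
      "sat H' (env us') (FCol c i) \<longleftrightarrow> sat H (env us) (FCol c i)"
      by blast+
    then show ?thesis using that assms(1) by (simp add: env_def)
  qed
  then show ?thesis
    using assms(1-3) unfolding partial_iso_def
    by (auto simp: in_set_zip dest: set_zip_leftD set_zip_rightD)
qed

fun hintikka :: "('v, 'c::finite) cgraph \<Rightarrow> nat \<Rightarrow> 'v list \<Rightarrow> 'c fm" where
  "hintikka H 0 us = fm_conj (atomic_diagram H us)"
| \<comment> \<open>the conjunct x = x keeps the rank at most j + 1 also when H is empty\<close>
  "hintikka H (Suc j) us = fm_conj (atomic_diagram H us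
     @ [FEx (length us) (hintikka H j (us @ [u])). u \<leftarrow> list_of_set (verts H)]
     @ [FNot (FEx (length us) (fm_conj (FEq (length us) (length us)
          # [FNot (hintikka H j (us @ [u])). u \<leftarrow> list_of_set (verts H)])))])"

lemma sat_hintikka_Suc:
  assumes "finite (verts H)"
  shows "sat H' e (hintikka H (Suc j) us) \<longleftrightarrow> (\<forall>\<phi>\<in>set (atomic_diagram H us). sat H' e \<phi>)
    \<and> (\<forall>u\<in>verts H. \<exists>v\<in>verts H'. sat H' (e(length us := v)) (hintikka H j (us @ [u])))
    \<and> (\<forall>v\<in>verts H'. \<exists>u\<in>verts H. sat H' (e(length us := v)) (hintikka H j (us @ [u])))"
  using set_list_of_set[OF assms] by (simp add: sat_fm_conj ball_Un) blast

lemma fv_hintikka: "fv (hintikka H j us) \<subseteq> {..<length us}"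
proof (induction j arbitrary: us)
  case 0
  then show ?case by (simp add: fv_fm_conj fv_atomic_diagram)
next
  case (Suc j)
  let ?n = "length us"
  have IH: "fv (hintikka H j (us @ [u])) \<subseteq> {..<Suc ?n}" for u
    using Suc.IH[of "us @ [u]"] by simp
  have ext: "fv (hintikka H j (us @ [u])) - {?n} \<subseteq> {..<?n}" for u
    using IH[of u] by auto
  have "fv (fm_conj (FEq ?n ?n # [FNot (hintikka H j (us @ [u])). u \<leftarrow> list_of_set (verts H)]))
      \<subseteq> {..<Suc ?n}"
    using IH by (intro fv_fm_conj) auto
  then have all: "fv (fm_conj (FEq ?n ?n # [FNot (hintikka H j (us @ [u])). u \<leftarrow> list_of_set (verts H)]))
      - {?n} \<subseteq> {..<?n}"
    by auto
  show ?case
    using ext all fv_atomic_diagram[of _ H us] unfolding hintikka.simps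
    by (intro fv_fm_conj) (auto; blast)
qed

(* The empty conjunction needs a quantifier, as the signature has no constant true. *)
lemma qr_hintikka: "us \<noteq> [] \<or> 0 < j \<Longrightarrow> qr (hintikka H j us) \<le> j"
proof (induction j arbitrary: us)
  case 0
  then have "atomic_diagram H us \<noteq> []" by (simp add: atomic_diagram_eq_Nil_iff)
  then show ?case unfolding hintikka.simps by (rule qr_fm_conj) (simp add: qr_atomic_diagram)
next
  case (Suc j)
  have IH: "qr (hintikka H j (us @ [u])) \<le> j" for u by (rule Suc.IH) simp
  have "qr (fm_conj (FEq (length us) (length us)
      # [FNot (hintikka H j (us @ [u])). u \<leftarrow> list_of_set (verts H)])) \<le> j"
    using IH by (intro qr_fm_conj) auto
  then show ?case
    using IH qr_atomic_diagram[of _ H us] unfolding hintikka.simps by (intro qr_fm_conj) auto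
qed

lemma sat_hintikka:
  assumes "finite (verts H)"
  shows "set us \<subseteq> verts H \<Longrightarrow> sat H (env us) (hintikka H j us)"
proof (induction j arbitrary: us)
  case 0
  then show ?case by (simp add: sat_fm_conj sat_atomic_diagram_iff)
next
  case (Suc j)
  have "sat H ((env us)(length us := u)) (hintikka H j (us @ [u]))" if "u \<in> verts H" for u
    using Suc.IH[of "us @ [u]"] Suc.prems that by (simp add: env_snoc del: fun_upd_apply)
  then show ?case
    unfolding sat_hintikka_Suc[OF assms] by (auto simp: sat_atomic_diagram_iff)
qed

lemma dup_wins_if_sat_hintikka:
  assumes "finite (verts H)"
  shows "set us \<subseteq> verts H \<Longrightarrow> set us' \<subseteq> verts H' \<Longrightarrow> length us' = length us
    \<Longrightarrow> sat H' (env us') (hintikka H j us) \<Longrightarrow> dup_wins H H' j (set (zip us us'))"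
proof (induction j arbitrary: us us')
  case 0
  then show ?case
    by (simp add: sat_fm_conj sat_atomic_diagram_iff partial_iso_if_same_atoms)
next
  case (Suc j)
  have "dup_wins H H' j (insert (u, u') (set (zip us us')))"
    if "u \<in> verts H" "u' \<in> verts H'" "sat H' ((env us')(length us := u')) (hintikka H j (us @ [u]))"
    for u u'
    using Suc.IH[of "us @ [u]" "us' @ [u']"] Suc.prems that by (simp add: env_snoc del: fun_upd_apply)
  moreover have "partial_iso H H' (set (zip us us'))"
    using Suc.prems partial_iso_if_same_atoms
    unfolding sat_hintikka_Suc[OF assms] sat_atomic_diagram_iff by blast
  ultimately show ?case
    using Suc.prems(4) unfolding sat_hintikka_Suc[OF assms] dup_wins.simps(2) by blast
qed

lemma dup_wins_if_tp_subset:
  fixes H :: "('v, 'c::finite) cgraph"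
  assumes "finite (verts H)" "0 < k" "tp k H \<subseteq> tp k H'"
  shows "dup_wins H H' k {}"
proof -
  have "hintikka H k [] \<in> tp k H"
    using fv_hintikka[of H k "[]"] qr_hintikka[of "[]" k H] sat_hintikka[OF assms(1), of "[]" k] assms(2)
    by (simp add: tp_def env_Nil)
  then have "sat H' (env []) (hintikka H k [])"
    using assms(3) by (simp add: tp_def env_Nil subset_iff)
  then show ?thesis using dup_wins_if_sat_hintikka[OF assms(1), of "[]" "[]"] by simp
qed

section \<open>Local structures and the mirror strategy\<close>

definition local_struct :: "('v, 'c) cgraph \<Rightarrow> nat \<Rightarrow> 'v set \<Rightarrow> ('v, 'c option) cgraph" where
  "local_struct G r W = induced (expand G W) (nbhd G r W)"

lemma verts_local_struct [simp]: "verts (local_struct G r W) = nbhd G r W"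
  using nbhd_subset_verts[of G r W] by (auto simp: local_struct_def induced_def expand_def)

lemma adj_local_struct [simp]:
  "adj (local_struct G r W) u v \<longleftrightarrow> adj G u v \<and> u \<in> nbhd G r W \<and> v \<in> nbhd G r W"
  by (simp add: local_struct_def induced_def expand_def)

lemma col_local_struct [simp]:
  "col (local_struct G r W) None = W \<inter> nbhd G r W"
  "col (local_struct G r W) (Some c) = col G c \<inter> nbhd G r W"
  by (simp_all add: local_struct_def induced_def expand_def)

lemma wf_local_struct:
  assumes wf: "wf_cgraph G"
  shows "wf_cgraph (local_struct G r W)"
  unfolding wf_cgraph_def
proof (intro conjI allI impI)
  show "finite (verts (local_struct G r W))"
    using wf nbhd_subset_verts[of G r W] finite_subset unfolding wf_cgraph_def by auto
  show "col (local_struct G r W) c \<subseteq> verts (local_struct G r W)" for c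
    by (cases c) auto
  show "\<not> adj (local_struct G r W) u u" for u
    using wf unfolding wf_cgraph_def by simp
qed (use wf_cgraph_adjD[OF wf] in auto)

lemma reach_local_struct_iff:
  assumes wf: "wf_cgraph G"
  shows "nbhd G n {u} \<subseteq> nbhd G r W \<Longrightarrow> reach (local_struct G r W) n u v \<longleftrightarrow> reach G n u v"
proof (induction n arbitrary: v)
  case 0
  then show ?case using reach_refl[of u G 0] by (auto simp: nbhd_def)
next
  case (Suc n)
  have "nbhd G n {u} \<subseteq> nbhd G r W"
    using nbhd_mono[of n "Suc n" "{u}" "{u}" G] Suc.prems by auto
  note IH = Suc.IH[OF this]
  have "w \<in> nbhd G r W \<and> v \<in> nbhd G r W" if "reach G n u w" "adj G w v" for w
  proof -
    have "reach G (Suc n) u w" "reach G (Suc n) u v"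
      using that reach_mono[of G n u w "Suc n"] by auto
    then show ?thesis
      using Suc.prems reach_target_verts[OF wf] unfolding nbhd_def by blast
  qed
  then show ?case using IH by auto
qed

lemma partial_iso_local_struct:
  assumes pi: "partial_iso (local_struct G r A) (local_struct G s B) P"
  shows "partial_iso G G P"
proof -
  have sub: "P \<subseteq> nbhd G r A \<times> nbhd G s B" using pi unfolding partial_iso_def by simp
  have "(x = y \<longleftrightarrow> x' = y') \<and> (adj G x y \<longleftrightarrow> adj G x' y') \<and> (x \<in> col G c \<longleftrightarrow> x' \<in> col G c)"
    if "(x, x') \<in> P" "(y, y') \<in> P" for x x' y y' c
    using partial_isoD(1,2)[OF pi that] partial_isoD(3)[OF pi that(1) that(1), of "Some c"] sub that
    by auto
  then show ?thesis
    using sub nbhd_subset_verts[of G r A] nbhd_subset_verts[of G s B] unfolding partial_iso_def by blast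
qed

(* A position of the game of G against itself: a position P of the game between the local
   structures of A and B is played in both directions, and the vertices in F are copied. *)
definition mirror :: "('v \<times> 'v) set \<Rightarrow> 'v set \<Rightarrow> ('v \<times> 'v) set" where
  "mirror P F = P \<union> P\<inverse> \<union> Id_on F"

lemma mirror_sym: "(x, y) \<in> mirror P F \<Longrightarrow> (y, x) \<in> mirror P F"
  unfolding mirror_def by blast

(* The mirror position with j rounds left: the 2^j-neighbourhoods of the local pebbles lie
   in the local structures, and the copied vertices are more than 2^j away from them. *)
definition local_inv ::
    "('v, 'c) cgraph \<Rightarrow> 'v set \<Rightarrow> 'v set \<Rightarrow> nat \<Rightarrow> nat \<Rightarrow> ('v \<times> 'v) set \<Rightarrow> 'v set \<Rightarrow> bool" where
  "local_inv G A B m j P F \<longleftrightarrow> j \<le> m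
     \<and> dup_wins (local_struct G (2 ^ m - 1) A) (local_struct G (2 ^ m - 1) B) j P
     \<and> P \<subseteq> nbhd G (2 ^ m - 2 ^ j) A \<times> nbhd G (2 ^ m - 2 ^ j) B
     \<and> F \<subseteq> verts G - nbhd G (2 ^ j) (Field P)"

lemma local_inv_converse: "local_inv G A B m j P F \<Longrightarrow> local_inv G B A m j (P\<inverse>) F"
  unfolding local_inv_def using dup_wins_converse[of _ _ j P] by auto

lemma partial_iso_mirror:
  assumes wf: "wf_cgraph G" and dist: "dist_gt G A B (2 ^ Suc m)" and inv: "local_inv G A B m j P F"
  shows "partial_iso G G (mirror P F)"
proof -
  let ?N = "nbhd G (2 ^ m - 1) A" and ?M = "nbhd G (2 ^ m - 1) B"
  have local: "partial_iso (local_struct G (2 ^ m - 1) A) (local_struct G (2 ^ m - 1) B) P"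
    using inv dup_wins_partial_iso unfolding local_inv_def by blast
  then have P: "partial_iso G G P" by (rule partial_iso_local_struct)
  have "P \<subseteq> ?N \<times> ?M" using local unfolding partial_iso_def by simp
  then have dom: "Domain P \<subseteq> ?N" "Range P \<subseteq> ?M" by auto
  have "(0::nat) < 2 ^ m" "(2::nat) ^ Suc m = 2 ^ m + 2 ^ m" by simp_all
  then have "(2::nat) ^ m - 1 + (2 ^ m - 1) < 2 ^ Suc m" by linarith
  then have "separated G ?N ?M" by (rule separated_nbhds[OF wf dist])
  then have "separated G (Domain P) (Range P)" using dom by (rule separated_mono)
  then have PP: "partial_iso G G (P \<union> P\<inverse>)"
    by (intro partial_iso_Un[OF P partial_iso_converse[OF P]]) (simp_all add: separated_sym)
  have F: "F \<subseteq> verts G - nbhd G (2 ^ j) (Field P)"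
    using inv unfolding local_inv_def by blast
  then have "separated G (Field P) F"
    using separated_compl_nbhd[OF wf, of "2 ^ j" "Field P"] by (simp add: separated_mono)
  moreover have "Domain (P \<union> P\<inverse>) = Field P" "Range (P \<union> P\<inverse>) = Field P"
    unfolding Field_def by auto
  moreover have "partial_iso G G (Id_on F)"
    using F by (intro partial_iso_Id_on) blast
  ultimately show ?thesis
    unfolding mirror_def by (intro partial_iso_Un[OF PP]) simp_all
qed

lemma dup_wins_local_answer:
  assumes wf: "wf_cgraph G"
    and game: "dup_wins (local_struct G r A) (local_struct G r B) (Suc j) P" and pp: "(p, p') \<in> P"
    and local: "nbhd G (2 ^ j) {p} \<subseteq> nbhd G r A" "nbhd G (2 ^ j) {p'} \<subseteq> nbhd G r B"
    and c: "c \<in> nbhd G (2 ^ j) {p}"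
  shows "\<exists>c'\<in>nbhd G (2 ^ j) {p'}.
    dup_wins (local_struct G r A) (local_struct G r B) j (insert (c, c') P)"
proof -
  let ?HA = "local_struct G r A" and ?HB = "local_struct G r B"
  have "c \<in> verts ?HA" using c local(1) by auto
  then obtain c' where c': "c' \<in> nbhd G r B" "dup_wins ?HA ?HB j (insert (c, c') P)"
    using game unfolding dup_wins.simps(2) verts_local_struct by blast
  have "reach ?HA (2 ^ j) p c" using c reach_local_struct_iff[OF wf local(1)] by (simp add: nbhd_def)
  then have "reach ?HB (2 ^ j) p' c'"
    using dup_wins_reach_iff[OF c'(2) wf_local_struct[OF wf] wf_local_struct[OF wf]] pp by blast
  then have "c' \<in> nbhd G (2 ^ j) {p'}"
    using reach_local_struct_iff[OF wf local(2)] c'(1) nbhd_subset_verts by (auto simp: nbhd_def)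
  then show ?thesis using c'(2) by blast
qed

lemma local_inv_extend_near:
  assumes wf: "wf_cgraph G" and inv: "local_inv G A B m (Suc j) P F"
    and c: "c \<in> nbhd G (2 ^ j) (Domain P)"
  shows "\<exists>c'. local_inv G A B m j (insert (c, c') P) F"
proof -
  let ?r = "2 ^ m - 2 ^ Suc j :: nat"
  from inv have jm: "Suc j \<le> m"
    and game: "dup_wins (local_struct G (2 ^ m - 1) A) (local_struct G (2 ^ m - 1) B) (Suc j) P"
    and P: "P \<subseteq> nbhd G ?r A \<times> nbhd G ?r B" and F: "F \<subseteq> verts G - nbhd G (2 ^ Suc j) (Field P)"
    unfolding local_inv_def by auto
  have "(2::nat) ^ Suc j \<le> 2 ^ m" using jm by (rule power_increasing) simp
  then have r: "?r + 2 ^ j = 2 ^ m - 2 ^ j" by simp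
  have r': "2 ^ m - 2 ^ j \<le> (2::nat) ^ m - 1" "?r \<le> 2 ^ m - 2 ^ j"
    by (rule diff_le_mono2, simp)+
  obtain p p' where pp: "(p, p') \<in> P" and pc: "c \<in> nbhd G (2 ^ j) {p}"
    using c unfolding nbhd_def by blast
  have "p \<in> nbhd G ?r A" "p' \<in> nbhd G ?r B" using P pp by blast+
  then have near: "nbhd G (2 ^ j) {p} \<subseteq> nbhd G (2 ^ m - 2 ^ j) A"
    "nbhd G (2 ^ j) {p'} \<subseteq> nbhd G (2 ^ m - 2 ^ j) B"
    by (metis nbhd_singleton_subset r)+
  obtain c' where c'_near: "c' \<in> nbhd G (2 ^ j) {p'}"
    and game': "dup_wins (local_struct G (2 ^ m - 1) A) (local_struct G (2 ^ m - 1) B) j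
      (insert (c, c') P)"
    using dup_wins_local_answer[OF wf game pp _ _ pc]
      subset_trans[OF near(1) nbhd_mono[OF r'(1) order_refl]]
      subset_trans[OF near(2) nbhd_mono[OF r'(1) order_refl]] by blast
  have grow: "nbhd G (2 ^ j) {x} \<subseteq> nbhd G (2 ^ Suc j) (Field P)"
    if "x \<in> nbhd G (2 ^ j) {q}" "q \<in> Field P" for x q
    using nbhd_singleton_subset[OF that(1), of "2 ^ j"] that(2)
      nbhd_mono[of "2 ^ j + 2 ^ j" "2 ^ Suc j" "{q}" "Field P" G] by auto
  have "Field (insert (c, c') P) = {c} \<union> {c'} \<union> Field P" by auto
  then have "nbhd G (2 ^ j) (Field (insert (c, c') P))
      = nbhd G (2 ^ j) {c} \<union> nbhd G (2 ^ j) {c'} \<union> nbhd G (2 ^ j) (Field P)"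
    by (simp only: nbhd_Un)
  moreover have "nbhd G (2 ^ j) (Field P) \<subseteq> nbhd G (2 ^ Suc j) (Field P)" by (rule nbhd_mono) simp_all
  ultimately have "F \<subseteq> verts G - nbhd G (2 ^ j) (Field (insert (c, c') P))"
    using F grow[OF pc] grow[OF c'_near] pp unfolding Field_def by blast
  moreover have "insert (c, c') P \<subseteq> nbhd G (2 ^ m - 2 ^ j) A \<times> nbhd G (2 ^ m - 2 ^ j) B"
    using P pc c'_near near nbhd_mono[OF r'(2) order_refl, of G] by blast
  ultimately show ?thesis using jm game' unfolding local_inv_def by auto
qed

lemma local_inv_extend_far:
  assumes inv: "local_inv G A B m (Suc j) P F" and c: "c \<in> verts G - nbhd G (2 ^ j) (Field P)"
  shows "local_inv G A B m j P (insert c F)"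
proof -
  from inv have "Suc j \<le> m"
    and game: "dup_wins (local_struct G (2 ^ m - 1) A) (local_struct G (2 ^ m - 1) B) (Suc j) P"
    and P: "P \<subseteq> nbhd G (2 ^ m - 2 ^ Suc j) A \<times> nbhd G (2 ^ m - 2 ^ Suc j) B"
    and F: "F \<subseteq> verts G - nbhd G (2 ^ Suc j) (Field P)"
    unfolding local_inv_def by blast+
  have "(2::nat) ^ m - 2 ^ Suc j \<le> 2 ^ m - 2 ^ j" by (rule diff_le_mono2) simp
  then have "P \<subseteq> nbhd G (2 ^ m - 2 ^ j) A \<times> nbhd G (2 ^ m - 2 ^ j) B"
    using P nbhd_mono[of "2 ^ m - 2 ^ Suc j" "2 ^ m - 2 ^ j" _ _ G] by blast
  moreover have "nbhd G (2 ^ j) (Field P) \<subseteq> nbhd G (2 ^ Suc j) (Field P)" by (rule nbhd_mono) simp_all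
  ultimately show ?thesis
    using \<open>Suc j \<le> m\<close> dup_wins_SucD[OF game] F c unfolding local_inv_def by auto
qed

lemma mirror_step:
  assumes wf: "wf_cgraph G" and inv: "local_inv G A B m (Suc j) P F" and c: "c \<in> verts G"
  shows "\<exists>P' F' c'. local_inv G A B m j P' F' \<and> mirror P F \<subseteq> mirror P' F' \<and> (c, c') \<in> mirror P' F'"
proof -
  have "Field P = Domain P \<union> Range P" by (rule Field_def)
  then consider (dom) "c \<in> nbhd G (2 ^ j) (Domain P)" | (ran) "c \<in> nbhd G (2 ^ j) (Domain (P\<inverse>))"
    | (far) "c \<in> verts G - nbhd G (2 ^ j) (Field P)"
    using c nbhd_Un[of G "2 ^ j" "Domain P" "Range P"] by auto
  then show ?thesis
  proof cases
    case dom
    then obtain c' where "local_inv G A B m j (insert (c, c') P) F"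
      using local_inv_extend_near[OF wf inv] by blast
    moreover have "mirror P F \<subseteq> mirror (insert (c, c') P) F" "(c, c') \<in> mirror (insert (c, c') P) F"
      unfolding mirror_def by auto
    ultimately show ?thesis by blast
  next
    case ran
    then obtain c' where "local_inv G B A m j (insert (c, c') (P\<inverse>)) F"
      using local_inv_extend_near[OF wf local_inv_converse[OF inv]] by blast
    then have "local_inv G A B m j ((insert (c, c') (P\<inverse>))\<inverse>) F"
      using local_inv_converse by fastforce
    moreover have "mirror P F \<subseteq> mirror ((insert (c, c') (P\<inverse>))\<inverse>) F"
      "(c, c') \<in> mirror ((insert (c, c') (P\<inverse>))\<inverse>) F"
      unfolding mirror_def by auto
    ultimately show ?thesis by blast
  next
    case far
    then have "local_inv G A B m j P (insert c F)" by (rule local_inv_extend_far[OF inv])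
    moreover have "mirror P F \<subseteq> mirror P (insert c F)" "(c, c) \<in> mirror P (insert c F)"
      using c unfolding mirror_def by auto
    ultimately show ?thesis by blast
  qed
qed

lemma dup_wins_mirror:
  assumes wf: "wf_cgraph G" and dist: "dist_gt G A B (2 ^ Suc m)"
  shows "local_inv G A B m j P F \<Longrightarrow> dup_wins G G j (mirror P F)"
proof (induction j arbitrary: P F)
  case 0
  then show ?case using partial_iso_mirror[OF wf dist] by simp
next
  case (Suc j)
  have answer: "\<exists>c'\<in>verts G. dup_wins G G j (insert (c, c') (mirror P F))
      \<and> dup_wins G G j (insert (c', c) (mirror P F))" if c: "c \<in> verts G" for c
  proof -
    obtain P' F' c' where inv': "local_inv G A B m j P' F'"
      and sub: "mirror P F \<subseteq> mirror P' F'" and cc': "(c, c') \<in> mirror P' F'"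
      using mirror_step[OF wf Suc.prems c] by blast
    have game: "dup_wins G G j (mirror P' F')" by (rule Suc.IH[OF inv'])
    then have "c' \<in> verts G"
      using cc' dup_wins_partial_iso[OF game] unfolding partial_iso_def by blast
    moreover have "insert (c, c') (mirror P F) \<subseteq> mirror P' F'"
      "insert (c', c) (mirror P F) \<subseteq> mirror P' F'"
      using sub cc' mirror_sym[OF cc'] by blast+
    ultimately show ?thesis using dup_wins_subset[OF game] by blast
  qed
  then show ?case using partial_iso_mirror[OF wf dist Suc.prems] by auto
qed

lemma ex_sat_transfer:
  fixes G :: "('v, 'c::finite) cgraph"
  assumes wf: "wf_cgraph G" and A: "A \<subseteq> verts G" and dist: "dist_gt G A B (2 ^ Suc m)"
    and tp: "tp (Suc m) (local_struct G (2 ^ m - 1) A) \<subseteq> tp (Suc m) (local_struct G (2 ^ m - 1) B)"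
    and \<phi>: "fv \<phi> \<subseteq> {x}" "qr \<phi> \<le> m"
    and a: "a \<in> A" "sat G ((\<lambda>_. undefined)(x := a)) \<phi>"
  shows "\<exists>b\<in>B. sat G ((\<lambda>_. undefined)(x := b)) \<phi>"
proof -
  let ?HA = "local_struct G (2 ^ m - 1) A" and ?HB = "local_struct G (2 ^ m - 1) B"
  have "dup_wins ?HA ?HB (Suc m) {}"
    using dup_wins_if_tp_subset[OF _ _ tp] wf_local_struct[OF wf] unfolding wf_cgraph_def by blast
  moreover have "a \<in> verts ?HA" using a(1) A subset_nbhd[OF A] by auto
  ultimately obtain b where b: "b \<in> verts ?HB" "dup_wins ?HA ?HB m {(a, b)}" by auto
  have "a \<in> col ?HA None" using \<open>a \<in> verts ?HA\<close> a(1) by simp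
  then have "b \<in> B" using partial_isoD(3)[OF dup_wins_partial_iso[OF b(2)], of a b a b None] by simp
  have "local_inv G A B m m {(a, b)} {}"
    using b(2) a(1) \<open>b \<in> B\<close> A \<open>a \<in> verts ?HA\<close> b(1) nbhd_subset_verts[of G]
    unfolding local_inv_def by (auto simp: nbhd_def intro: reach_refl)
  then have "dup_wins G G m (mirror {(a, b)} {})" by (rule dup_wins_mirror[OF wf dist])
  then have "sat G ((\<lambda>_. undefined)(x := a)) \<phi> \<longleftrightarrow> sat G ((\<lambda>_. undefined)(x := b)) \<phi>"
    by (rule dup_wins_sat) (use \<phi> in \<open>auto simp: mirror_def\<close>)
  then show ?thesis using a(2) \<open>b \<in> B\<close> by blast
qed

theorem lemma4p12:
  fixes G :: "('v, 'c::finite) cgraph" and A B :: "'v set" and k :: nat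
    and \<phi> :: "'c fm" and x :: nat
  assumes "wf_cgraph G"
    and "k \<ge> 1"
    and "A \<subseteq> verts G" and "B \<subseteq> verts G"
    and "dist_gt G A B (2 ^ k)"
    and "tp k (induced (expand G A) (nbhd G (2 ^ (k - 1) - 1) A))
         = tp k (induced (expand G B) (nbhd G (2 ^ (k - 1) - 1) B))"
    and "fv \<phi> \<subseteq> {x}" and "qr \<phi> \<le> k - 1"
  shows "(\<exists>a\<in>A. sat G ((\<lambda>_. undefined)(x := a)) \<phi>)
     \<longleftrightarrow> (\<exists>b\<in>B. sat G ((\<lambda>_. undefined)(x := b)) \<phi>)"
proof -
  obtain m where k: "k = Suc m" using \<open>k \<ge> 1\<close> by (cases k) auto
  have tp: "tp (Suc m) (local_struct G (2 ^ m - 1) A) = tp (Suc m) (local_struct G (2 ^ m - 1) B)"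
    using assms(6) unfolding k local_struct_def by simp
  have dist: "dist_gt G A B (2 ^ Suc m)" "dist_gt G B A (2 ^ Suc m)"
    using assms(5) dist_gt_sym[OF assms(1)] unfolding k by blast+
  show ?thesis
    using ex_sat_transfer[OF assms(1,3) dist(1) equalityD1[OF tp] assms(7)]
      ex_sat_transfer[OF assms(1,4) dist(2) equalityD2[OF tp] assms(7)] assms(8) k by auto
qed

end
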